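(* $\mathsf{GK(A_m)}$ admits cut-elimination: every sequent derivable in $\mathsf{GK(A_m)}$ has a $\mathsf{GK(A_m)}$-derivation containing no application of the rule (cut).
   Context: $\mathcal{L}_{A_m}^{\Box}$-formulas are built from a countably infinite set of variables using binary $\to$ and unary $\Box$. A sequent $\Gamma\Rightarrow\Delta$ is an ordered pair of finite multisets of formulas; $\Gamma,\Delta$ is multiset union, $n\Gamma$ is $\Gamma$ repeated $n$ times, $n[\varphi]$ is $n$ copies of $\varphi$, $\Box\Gamma=[\Box\varphi:\varphi\in\Gamma]$. The calculus $\mathsf{GK(A_m)}$ has rules: (id) $\Delta\Rightarrow\Delta$; (cut) from $\Gamma,\varphi\Rightarrow\Delta$ and $\Pi\Rightarrow\varphi,\Sigma$ infer $\Gamma,\Pi\Rightarrow\Sigma,\Delta$; (mix) from $\Gamma\Rightarrow\Delta$ and $\Pi\Rightarrow\Sigma$ infer $\Gamma,\Pi\Rightarrow\Sigma,\Delta$; (sc$_n$) from $n\Gamma\Rightarrow n\Delta$ infer $\Gamma\Rightarrow\Delta$ ($n\ge2$); ($\to\Rightarrow$) from $\Gamma,\psi\Rightarrow\varphi,\Delta$ infer $\Gamma,\varphi\to\psi\Rightarrow\Delta$; ($\Rightarrow\to$) from $\Gamma,\varphi\Rightarrow\psi,\Delta$ infer $\Gamma\Rightarrow\varphi\to\psi,\Delta$; ($\Box_n$) from $\Gamma\Rightarrow n[\varphi]$ infer $\Box\Gamma\Rightarrow n[\Box\varphi]$ ($n\ge0$). A derivation is a finite tree of sequents in which each node with its parents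 is a rule instance. *)

theory Defs
  imports "HOL-Library.Multiset"
begin

datatype fm = Var nat | Imp fm fm | Box fm

type_synonym sequent = "fm multiset \<times> fm multiset"

text \<open>Derivability in GK(A_m). The flag c says whether (cut) may be used:
  GKder True S  = S derivable in GK(A_m);
  GKder False S = S has a GK(A_m)-derivation with no application of (cut).\<close>
inductive GKder :: "bool \<Rightarrow> sequent \<Rightarrow> bool" for c :: bool where
  ident: "GKder c (D, D)"
| cut: "\<lbrakk> c; GKder c (G + {#phi#}, D); GKder c (P, {#phi#} + S) \<rbrakk>
        \<Longrightarrow> GKder c (G + P, S + D)"
| mix: "\<lbrakk> GKder c (G, D); GKder c (P, S) \<rbrakk> \<Longrightarrow> GKder c (G + P, S + D)"
| sc: "\<lbrakk> n \<ge> 2; GKder c (repeat_mset n G, repeat_mset n D) \<rbrakk> \<Longrightarrow> GKder c (G, D)"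
| impL: "GKder c (G + {#psi#}, {#phi#} + D) \<Longrightarrow> GKder c (G + {#Imp phi psi#}, D)"
| impR: "GKder c (G + {#phi#}, {#psi#} + D) \<Longrightarrow> GKder c (G, {#Imp phi psi#} + D)"
| box: "GKder c (G, replicate_mset n phi) \<Longrightarrow>
        GKder c (image_mset Box G, replicate_mset n (Box phi))"

end

theory Submission
  imports Defs
begin

text \<open>Since (mix) is available, (cut) amounts to cancellation: from \<open>\<Gamma>, k\<phi> \<Rightarrow> k\<phi>, \<Delta>\<close>
  infer \<open>\<Gamma> \<Rightarrow> \<Delta>\<close>. Cancellation is admissible in the cut-free calculus, by induction
  on \<open>\<phi>\<close>. Both implication rules are invertible, so cancelling \<open>\<phi> \<rightarrow> \<psi>\<close> reduces to
  cancelling \<open>\<phi>\<close> and \<open>\<psi>\<close>. For a variable or a boxed formula one follows the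
  derivation, removing as many copies as possible: copies on opposite sides meet only at (mix),
  where they are removed by a multicut whose scaling of the premises is undone by (sc), and at
  (\<open>\<Box>\<^sub>n\<close>), where they come from copies of \<open>\<chi>\<close> that are cancelled by the induction
  hypothesis. The multicut on \<open>\<Box>\<chi>\<close> in turn follows both premises up to their last
  (\<open>\<Box>\<^sub>n\<close>) inferences and cuts the copies of \<open>\<chi>\<close> above them.\<close>

lemma replicate_mset_add: "replicate_mset (a + b) x = replicate_mset a x + replicate_mset b x"
  by (simp add: multiset_eq_iff)

lemma repeat_replicate_mset: "repeat_mset n (replicate_mset k x) = replicate_mset (n * k) x"
  by (simp add: multiset_eq_iff)

lemma image_repeat_mset: "image_mset f (repeat_mset n M) = repeat_mset n (image_mset f M)"
  by (induction n) auto

lemma union_eq_plus_replicate_msetE: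
  assumes "G1 + G2 = A + replicate_mset a x"
  obtains A1 A2 a1 a2 where "G1 = A1 + replicate_mset a1 x" "G2 = A2 + replicate_mset a2 x"
    "A = A1 + A2" "a = a1 + a2"
proof -
  define a1 where "a1 = min (count G1 x) a"
  define a2 where "a2 = a - a1"
  have "count G1 x + count G2 x = count A x + a"
    using arg_cong[OF assms, of "\<lambda>M. count M x"] by simp
  then have "replicate_mset a1 x \<subseteq># G1" "replicate_mset a2 x \<subseteq># G2"
    by (auto simp: a1_def a2_def subseteq_mset_def)
  with assms show ?thesis
    by (intro that[of "G1 - replicate_mset a1 x" a1 "G2 - replicate_mset a2 x" a2])
       (auto simp: a1_def a2_def multiset_eq_iff subseteq_mset_def)
qed

lemma add_mset_eq_plus_replicate_msetE:
  assumes "add_mset y G = A + replicate_mset a x" "y \<noteq> x"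
  obtains A' where "A = add_mset y A'" "G = A' + replicate_mset a x"
proof -
  from assms have "y \<in># A"
    by (metis in_replicate_mset union_iff union_single_eq_member add_mset_add_single)
  then obtain A' where "A = add_mset y A'" by (metis insert_DiffM)
  with assms show ?thesis using that by simp
qed

lemma image_Box_eq_plus_replicate_msetE:
  assumes "image_mset Box G = A + replicate_mset a (Box chi)"
  obtains G' where "G = G' + replicate_mset a chi" "A = image_mset Box G'"
  using image_mset_eq_plus_image_msetD[of Box G A "replicate_mset a chi"] assms that
  by (auto simp: inj_on_def)

lemma replicate_mset_eq_replicate_plusD:
  assumes "replicate_mset m y = replicate_mset b x + E" "b > 0"
  shows "x = y" "b \<le> m" "E = replicate_mset (m - b) y"
proof -
  have count: "count (replicate_mset m y) z = count (replicate_mset b x) z + count E z" for z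
    using assms by simp
  show "x = y" using count[of x] assms(2) by (auto split: if_splits)
  then have "count E z = (if z = y then m - b else 0)" "b \<le> m" for z
    using count[of z] count[of y] by auto
  then show "b \<le> m" "E = replicate_mset (m - b) y"
    by (auto simp: multiset_eq_iff)
qed

lemma GKder_cutfree_induct [consumes 1, case_names ident mix sc impL impR box]:
  assumes "GKder False (G, D)"
    and "\<And>D. Q D D"
    and "\<And>G1 D1 G2 D2. GKder False (G1, D1) \<Longrightarrow> Q G1 D1 \<Longrightarrow> GKder False (G2, D2) \<Longrightarrow> Q G2 D2
           \<Longrightarrow> Q (G1 + G2) (D1 + D2)"
    and "\<And>n G D. n \<ge> 2 \<Longrightarrow> GKder False (repeat_mset n G, repeat_mset n D)
           \<Longrightarrow> Q (repeat_mset n G) (repeat_mset n D) \<Longrightarrow> Q G D"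
    and "\<And>G D phi psi. GKder False (add_mset psi G, add_mset phi D)
           \<Longrightarrow> Q (add_mset psi G) (add_mset phi D) \<Longrightarrow> Q (add_mset (Imp phi psi) G) D"
    and "\<And>G D phi psi. GKder False (add_mset phi G, add_mset psi D)
           \<Longrightarrow> Q (add_mset phi G) (add_mset psi D) \<Longrightarrow> Q G (add_mset (Imp phi psi) D)"
    and "\<And>G n phi. GKder False (G, replicate_mset n phi) \<Longrightarrow> Q G (replicate_mset n phi)
           \<Longrightarrow> Q (image_mset Box G) (replicate_mset n (Box phi))"
  shows "Q G D"
proof -
  have "GKder False S \<Longrightarrow> Q (fst S) (snd S)" for S
    by (induction rule: GKder.induct) (use assms(2-) in \<open>auto simp: add.commute\<close>)
  from this[OF assms(1)] show ?thesis by simp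
qed

lemma GKder_add: "GKder c (G1, D1) \<Longrightarrow> GKder c (G2, D2) \<Longrightarrow> GKder c (G1 + G2, D1 + D2)"
  using GKder.mix[of c G1 D1 G2 D2] by (simp add: add.commute)

lemma GKder_impL':
  "GKder c (add_mset psi G, add_mset phi D) \<Longrightarrow> GKder c (add_mset (Imp phi psi) G, D)"
  using GKder.impL[of c G psi phi D] by simp

lemma GKder_impR':
  "GKder c (add_mset phi G, add_mset psi D) \<Longrightarrow> GKder c (G, add_mset (Imp phi psi) D)"
  using GKder.impR[of c G phi psi D] by simp

lemma GKder_repeat: "GKder c (G, D) \<Longrightarrow> GKder c (repeat_mset n G, repeat_mset n D)"
  by (induction n) (auto intro: GKder_add GKder.ident[of c "{#}", simplified])

lemma GKder_unrepeat: "GKder c (repeat_mset n G, repeat_mset n D) \<Longrightarrow> 0 < n \<Longrightarrow> GKder c (G, D)"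
  using GKder.sc[of n c G D] by (cases "n = 1") auto

lemma GKder_impL_replicate:
  "GKder c (G + replicate_mset k psi, replicate_mset k phi + D) \<Longrightarrow>
   GKder c (G + replicate_mset k (Imp phi psi), D)"
proof (induction k arbitrary: G)
  case (Suc k)
  then have "GKder c (add_mset (Imp phi psi) G + replicate_mset k psi, replicate_mset k phi + D)"
    using GKder_impL'[of c psi "G + replicate_mset k psi" phi "replicate_mset k phi + D"] by simp
  from Suc.IH[OF this] show ?case by simp
qed simp

lemma GKder_impR_replicate:
  "GKder c (G + replicate_mset k phi, replicate_mset k psi + D) \<Longrightarrow>
   GKder c (G, replicate_mset k (Imp phi psi) + D)"
proof (induction k arbitrary: D)
  case (Suc k)
  then have "GKder c (G + replicate_mset k phi, replicate_mset k psi + add_mset (Imp phi psi) D)"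
    using GKder_impR'[of c phi "G + replicate_mset k phi" psi "replicate_mset k psi + D"] by simp
  from Suc.IH[OF this] show ?case by simp
qed simp

lemma impL_inversion:
  assumes "GKder False (G', D)" "G' = G + replicate_mset k (Imp phi psi)"
  shows "GKder False (G + replicate_mset k psi, replicate_mset k phi + D)"
  using assms
proof (induction G' D arbitrary: G k rule: GKder_cutfree_induct)
  case (ident D)
  have "GKder False ({#psi#}, {#Imp phi psi, phi#})"
    using GKder_impR'[of False phi "{#psi#}" psi "{#phi#}"] GKder.ident[of False "{#phi, psi#}"]
    by (simp add: add_mset_commute)
  from GKder_add[OF GKder.ident GKder_repeat[OF this, of k]] show ?case
    using ident by (simp add: ac_simps)
next
  case (mix G1 D1 G2 D2)
  then obtain A1 A2 a1 a2 where "G1 = A1 + replicate_mset a1 (Imp phi psi)"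
    "G2 = A2 + replicate_mset a2 (Imp phi psi)" "G = A1 + A2" "k = a1 + a2"
    by (auto elim: union_eq_plus_replicate_msetE)
  with GKder_add[OF mix.IH(1) mix.IH(2)] show ?case
    by (simp add: ac_simps replicate_mset_add)
next
  case (sc n G0 D0)
  from sc.prems sc.IH[of "repeat_mset n G" "n * k"]
  have "GKder False (repeat_mset n (G + replicate_mset k psi),
      repeat_mset n (replicate_mset k phi + D0))"
    by (simp add: repeat_replicate_mset)
  then show ?case by (rule GKder_unrepeat) (use sc.hyps in simp)
next
  case (impL G0 D0 phi' psi')
  show ?case
  proof (cases "k > 0 \<and> Imp phi' psi' = Imp phi psi")
    case True
    then obtain k' where "k = Suc k'" "phi' = phi" "psi' = psi" by (auto dest: gr0_implies_Suc)
    with impL.prems impL.IH[of "add_mset psi G" k'] show ?thesis by simp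
  next
    case False
    with impL.prems obtain A where "G = add_mset (Imp phi' psi') A"
      "G0 = A + replicate_mset k (Imp phi psi)"
      by (cases "k = 0") (auto elim: add_mset_eq_plus_replicate_msetE)
    with impL.IH[of "add_mset psi' A" k] show ?thesis
      using GKder_impL'[of False psi' "A + replicate_mset k psi" phi' "replicate_mset k phi + D0"]
      by simp
  qed
next
  case (impR G0 D0 phi' psi')
  with impR.IH[of "add_mset phi' G" k] show ?case
    using GKder_impR'[of False phi' "G + replicate_mset k psi" psi' "replicate_mset k phi + D0"]
    by simp
next
  case (box G0 n chi)
  then have "k = 0"
    by (metis fm.distinct(6) image_iff in_replicate_mset not_gr0 set_image_mset union_iff)
  with box show ?case by (auto intro: GKder.box)
qed

lemma impR_inversion:
  assumes "GKder False (G, D')" "D' = replicate_mset k (Imp phi psi) + D"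
  shows "GKder False (G + replicate_mset k phi, replicate_mset k psi + D)"
  using assms
proof (induction G D' arbitrary: D k rule: GKder_cutfree_induct)
  case (ident G)
  have "GKder False ({#phi, Imp phi psi#}, {#psi#})"
    using GKder_impL'[of False psi "{#phi#}" phi "{#psi#}"] GKder.ident[of False "{#phi, psi#}"]
    by (simp add: add_mset_commute)
  from GKder_add[OF GKder.ident GKder_repeat[OF this, of k]] show ?case
    using ident by (simp add: ac_simps)
next
  case (mix G1 D1 G2 D2)
  then obtain E1 E2 a1 a2 where "D1 = E1 + replicate_mset a1 (Imp phi psi)"
    "D2 = E2 + replicate_mset a2 (Imp phi psi)" "D = E1 + E2" "k = a1 + a2"
    by (auto simp: add.commute elim: union_eq_plus_replicate_msetE)
  with GKder_add[OF mix.IH(1) mix.IH(2)] show ?case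
    by (simp add: ac_simps replicate_mset_add)
next
  case (sc n G0 D0)
  from sc.prems sc.IH[of "n * k" "repeat_mset n D"]
  have "GKder False (repeat_mset n (G0 + replicate_mset k phi),
      repeat_mset n (replicate_mset k psi + D))"
    by (simp add: repeat_replicate_mset)
  then show ?case by (rule GKder_unrepeat) (use sc.hyps in simp)
next
  case (impR G0 D0 phi' psi')
  show ?case
  proof (cases "k > 0 \<and> Imp phi' psi' = Imp phi psi")
    case True
    then obtain k' where "k = Suc k'" "phi' = phi" "psi' = psi" by (auto dest: gr0_implies_Suc)
    with impR.prems impR.IH[of k' "add_mset psi D"] show ?thesis by simp
  next
    case False
    with impR.prems obtain E where "D = add_mset (Imp phi' psi') E"
      "D0 = E + replicate_mset k (Imp phi psi)"
      by (cases "k = 0") (auto simp: add.commute elim: add_mset_eq_plus_replicate_msetE)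
    with impR.IH[of k "add_mset psi' E"] show ?thesis
      using GKder_impR'[of False phi' "G0 + replicate_mset k phi" psi' "replicate_mset k psi + E"]
      by (simp add: add.commute)
  qed
next
  case (impL G0 D0 phi' psi')
  with impL.IH[of k "add_mset phi' D"] show ?case
    using GKder_impL'[of False psi' "G0 + replicate_mset k phi" phi' "replicate_mset k psi + D"]
    by simp
next
  case (box G0 n chi)
  then have "k = 0" by (metis fm.distinct(6) in_replicate_mset not_gr0 union_iff)
  with box show ?case by (auto intro: GKder.box)
qed

definition cancellable :: "fm \<Rightarrow> bool" where
  "cancellable x \<longleftrightarrow> (\<forall>G D k. GKder False (G + replicate_mset k x, replicate_mset k x + D)
     \<longrightarrow> GKder False (G, D))"

definition mcut_admissible :: "fm \<Rightarrow> bool" where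
  "mcut_admissible x \<longleftrightarrow> (\<forall>A a B C b E. GKder False (A + replicate_mset a x, B)
     \<longrightarrow> GKder False (C, replicate_mset b x + E)
     \<longrightarrow> GKder False (repeat_mset b A + repeat_mset a C, repeat_mset b B + repeat_mset a E))"

lemma cancellableD:
  "cancellable x \<Longrightarrow> GKder False (G + replicate_mset k x, replicate_mset k x + D)
   \<Longrightarrow> GKder False (G, D)"
  unfolding cancellable_def by blast

lemma mcut_admissibleD:
  "mcut_admissible x \<Longrightarrow> GKder False (A + replicate_mset a x, B)
   \<Longrightarrow> GKder False (C, replicate_mset b x + E)
   \<Longrightarrow> GKder False (repeat_mset b A + repeat_mset a C, repeat_mset b B + repeat_mset a E)"
  unfolding mcut_admissible_def by blast

lemma cancellable_imp_mcut_admissible: "cancellable x \<Longrightarrow> mcut_admissible x"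
  unfolding mcut_admissible_def
proof (intro allI impI)
  fix A a B C b E
  assume x: "cancellable x" and left: "GKder False (A + replicate_mset a x, B)"
    and right: "GKder False (C, replicate_mset b x + E)"
  from GKder_add[OF GKder_repeat[OF left, of b] GKder_repeat[OF right, of a]]
  have "GKder False ((repeat_mset b A + repeat_mset a C) + replicate_mset (a * b) x,
      replicate_mset (a * b) x + (repeat_mset b B + repeat_mset a E))"
    by (simp add: repeat_replicate_mset ac_simps)
  then show "GKder False (repeat_mset b A + repeat_mset a C, repeat_mset b B + repeat_mset a E)"
    by (rule cancellableD[OF x])
qed

lemma cancellable_Imp:
  assumes "cancellable phi" "cancellable psi"
  shows "cancellable (Imp phi psi)"
  unfolding cancellable_def
proof (intro allI impI)
  fix G D k
  assume "GKder False (G + replicate_mset k (Imp phi psi), replicate_mset k (Imp phi psi) + D)"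
  from impL_inversion[OF this refl]
  have "GKder False (G + replicate_mset k psi,
      replicate_mset k (Imp phi psi) + (replicate_mset k phi + D))"
    by (simp add: ac_simps)
  from impR_inversion[OF this refl]
  have "GKder False ((G + replicate_mset k phi) + replicate_mset k psi,
      replicate_mset k psi + (replicate_mset k phi + D))"
    by (simp add: ac_simps)
  then have "GKder False (G + replicate_mset k phi, replicate_mset k phi + D)"
    by (rule cancellableD[OF assms(2)])
  then show "GKder False (G, D)"
    by (rule cancellableD[OF assms(1)])
qed

text \<open>The \<open>k\<close> copies of \<open>\<chi>\<close> are cut above the boxes; scaling the result by \<open>b\<close> and
  adding \<open>a (k - b)\<close> copies of the boxed right premise gives \<open>k\<close> times the claimed sequent.\<close>

lemma mcut_Box_Box:
  assumes chi: "cancellable chi"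
    and left: "GKder False (G + replicate_mset a chi, replicate_mset m theta)"
    and right: "GKder False (H, replicate_mset k chi)" and "0 < b" "b \<le> k"
  shows "GKder False (repeat_mset b (image_mset Box G) + repeat_mset a (image_mset Box H),
    replicate_mset (b * m) (Box theta) + replicate_mset (a * (k - b)) (Box chi))"
proof -
  from mcut_admissibleD[OF cancellable_imp_mcut_admissible[OF chi] left, of H k "{#}"] right
  have "GKder False (repeat_mset k G + repeat_mset a H, replicate_mset (k * m) theta)"
    by (simp add: repeat_replicate_mset)
  from GKder.box[OF this] have boxed:
    "GKder False (repeat_mset k (image_mset Box G) + repeat_mset a (image_mset Box H),
       replicate_mset (k * m) (Box theta))"
    by (simp add: image_repeat_mset)
  have boxed_right: "GKder False (image_mset Box H, replicate_mset k (Box chi))"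
    using GKder.box[OF right] by simp
  from \<open>b \<le> k\<close> obtain j where k: "k = b + j" using le_Suc_ex by blast
  have "repeat_mset b (repeat_mset k M + repeat_mset a N) + repeat_mset (a * j) N
      = repeat_mset k (repeat_mset b M + repeat_mset a N)" for M N :: "fm multiset"
    by (simp add: k multiset_eq_iff algebra_simps)
  moreover have "repeat_mset b (replicate_mset (k * m) x) + repeat_mset (a * j) (replicate_mset k y)
      = repeat_mset k (replicate_mset (b * m) x + replicate_mset (a * j) y)" for x y :: fm
    by (simp add: k multiset_eq_iff algebra_simps)
  ultimately have "GKder False
      (repeat_mset k (repeat_mset b (image_mset Box G) + repeat_mset a (image_mset Box H)),
      repeat_mset k (replicate_mset (b * m) (Box theta) + replicate_mset (a * j) (Box chi)))"
    using GKder_add[OF GKder_repeat[OF boxed, of b] GKder_repeat[OF boxed_right, of "a * j"]]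
    by (simp only:)
  then have "GKder False (repeat_mset b (image_mset Box G) + repeat_mset a (image_mset Box H),
      replicate_mset (b * m) (Box theta) + replicate_mset (a * j) (Box chi))"
    by (rule GKder_unrepeat) (simp add: k \<open>0 < b\<close>)
  then show ?thesis by (simp add: k)
qed

lemma mcut_Box_right:
  assumes chi: "cancellable chi"
    and left: "GKder False (G + replicate_mset a chi, replicate_mset m theta)"
    and "GKder False (C, M)" "M = replicate_mset b (Box chi) + E"
  shows "GKder False (repeat_mset b (image_mset Box G) + repeat_mset a C,
    replicate_mset (b * m) (Box theta) + repeat_mset a E)"
  using assms(3,4)
proof (induction C M arbitrary: b E rule: GKder_cutfree_induct)
  case (ident M)
  have "GKder False (image_mset Box G + replicate_mset a (Box chi), replicate_mset m (Box theta))"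
    using GKder.box[OF left] by simp
  from GKder_add[OF GKder_repeat[OF this, of b] GKder.ident[of False "repeat_mset a E"]] show ?case
    using ident by (simp add: repeat_replicate_mset ac_simps)
next
  case (mix C1 M1 C2 M2)
  then obtain E1 E2 b1 b2 where parts: "M1 = E1 + replicate_mset b1 (Box chi)"
    "M2 = E2 + replicate_mset b2 (Box chi)" "E = E1 + E2" "b = b1 + b2"
    by (auto simp: add.commute elim: union_eq_plus_replicate_msetE)
  from parts GKder_add[OF mix.IH(1)[of b1 E1] mix.IH(2)[of b2 E2]] show ?case
    by (simp add: algebra_simps repeat_mset_distrib replicate_mset_add)
next
  case (sc n C0 M0)
  from sc.prems sc.IH[of "n * b" "repeat_mset n E"]
  have "GKder False (repeat_mset n (repeat_mset b (image_mset Box G) + repeat_mset a C0),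
      repeat_mset n (replicate_mset (b * m) (Box theta) + repeat_mset a E))"
    by (simp add: repeat_replicate_mset ac_simps)
  then show ?case by (rule GKder_unrepeat) (use sc.hyps in simp)
next
  case (impL C0 M0 phi psi)
  from impL.prems impL.IH[of b "add_mset phi E"]
  have "GKder False ((repeat_mset b (image_mset Box G) + repeat_mset a C0) + replicate_mset a psi,
      replicate_mset a phi + (replicate_mset (b * m) (Box theta) + repeat_mset a E))"
    by (simp add: ac_simps)
  from GKder_impL_replicate[OF this] show ?case by (simp add: ac_simps)
next
  case (impR C0 M0 phi psi)
  then obtain E' where E': "E = add_mset (Imp phi psi) E'" "M0 = E' + replicate_mset b (Box chi)"
    by (auto simp: add.commute elim: add_mset_eq_plus_replicate_msetE)
  with impR.IH[of b "add_mset psi E'"]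
  have "GKder False ((repeat_mset b (image_mset Box G) + repeat_mset a C0) + replicate_mset a phi,
      replicate_mset a psi + (replicate_mset (b * m) (Box theta) + repeat_mset a E'))"
    by (simp add: ac_simps)
  from GKder_impR_replicate[OF this] show ?case using E' by (simp add: ac_simps)
next
  case (box H k zeta)
  show ?case
  proof (cases "b = 0")
    case True
    with box.prems GKder_repeat[OF GKder.box[OF box.hyps(1)], of a] show ?thesis by simp
  next
    case False
    with box.prems have "zeta = chi" "b \<le> k" "E = replicate_mset (k - b) (Box chi)"
      using replicate_mset_eq_replicate_plusD[of k "Box zeta" b "Box chi" E] by auto
    with mcut_Box_Box[OF chi left] box.hyps(1) False show ?thesis
      by (simp add: repeat_replicate_mset)
  qed
qed

lemma mcut_non_Imp_left:
  assumes not_Imp: "\<And>phi psi. x \<noteq> Imp phi psi"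
    and Box: "\<And>chi. x = Box chi \<Longrightarrow> cancellable chi"
    and right: "GKder False (C, replicate_mset b x + E)"
    and "GKder False (A', B)" "A' = A + replicate_mset a x"
  shows "GKder False (repeat_mset b A + repeat_mset a C, repeat_mset b B + repeat_mset a E)"
  using assms(4,5)
proof (induction A' B arbitrary: A a rule: GKder_cutfree_induct)
  case (ident M)
  from GKder_add[OF GKder.ident[of False "repeat_mset b A"] GKder_repeat[OF right, of a]] show ?case
    using ident by (simp add: repeat_replicate_mset ac_simps)
next
  case (mix G1 D1 G2 D2)
  then obtain A1 A2 a1 a2 where parts: "G1 = A1 + replicate_mset a1 x"
    "G2 = A2 + replicate_mset a2 x" "A = A1 + A2" "a = a1 + a2"
    by (auto elim: union_eq_plus_replicate_msetE)
  from parts GKder_add[OF mix.IH(1)[of A1 a1] mix.IH(2)[of A2 a2]] show ?case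
    by (simp add: ac_simps repeat_mset_distrib)
next
  case (sc n G0 D0)
  from sc.prems sc.IH[of "repeat_mset n A" "n * a"]
  have "GKder False (repeat_mset n (repeat_mset b A + repeat_mset a C),
      repeat_mset n (repeat_mset b D0 + repeat_mset a E))"
    by (simp add: repeat_replicate_mset ac_simps)
  then show ?case by (rule GKder_unrepeat) (use sc.hyps in simp)
next
  case (impL G0 D0 phi psi)
  then obtain A0 where A0: "A = add_mset (Imp phi psi) A0" "G0 = A0 + replicate_mset a x"
    using not_Imp by (metis add_mset_eq_plus_replicate_msetE)
  with impL.IH[of "add_mset psi A0" a]
  have "GKder False ((repeat_mset b A0 + repeat_mset a C) + replicate_mset b psi,
      replicate_mset b phi + (repeat_mset b D0 + repeat_mset a E))"
    by (simp add: ac_simps)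
  from GKder_impL_replicate[OF this] show ?case using A0 by (simp add: ac_simps)
next
  case (impR G0 D0 phi psi)
  with impR.IH[of "add_mset phi A" a]
  have "GKder False ((repeat_mset b A + repeat_mset a C) + replicate_mset b phi,
      replicate_mset b psi + (repeat_mset b D0 + repeat_mset a E))"
    by (simp add: ac_simps)
  from GKder_impR_replicate[OF this] show ?case by (simp add: ac_simps)
next
  case (box G m theta)
  show ?case
  proof (cases "a = 0")
    case True
    with box.prems GKder_repeat[OF GKder.box[OF box.hyps(1)], of b] show ?thesis by simp
  next
    case False
    with box.prems obtain chi where x: "x = Box chi"
      by (metis image_iff in_replicate_mset neq0_conv set_image_mset union_iff)
    with box.prems obtain G' where "G = G' + replicate_mset a chi" "A = image_mset Box G'"
      by (auto elim: image_Box_eq_plus_replicate_msetE)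
    with mcut_Box_right[OF Box[OF x] _ right[unfolded x] refl] box.hyps(1) x show ?thesis
      by (simp add: repeat_replicate_mset)
  qed
qed

lemma mcut_admissible_non_Imp:
  assumes "\<And>phi psi. x \<noteq> Imp phi psi" and "\<And>chi. x = Box chi \<Longrightarrow> cancellable chi"
  shows "mcut_admissible x"
  unfolding mcut_admissible_def using mcut_non_Imp_left[OF assms] by blast

lemma mcut_opposite:
  assumes x: "mcut_admissible x"
    and left: "GKder False (G1 + replicate_mset u x, D1)"
    and right: "GKder False (G2, replicate_mset v x + D2)"
  shows "GKder False (G1 + G2 + replicate_mset (u - v) x, replicate_mset (v - u) x + (D1 + D2))"
proof (cases "u = 0 \<or> v = 0")
  case True
  with GKder_add[OF left right] show ?thesis by (auto simp: ac_simps)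
next
  case False
  define k where "k = min u v"
  have "u - v + k = u" "k + (v - u) = v" by (simp_all add: k_def)
  have left': "GKder False ((G1 + replicate_mset (u - v) x) + replicate_mset k x, D1)"
    using left by (simp add: replicate_mset_add[symmetric] add.assoc \<open>u - v + k = u\<close>)
  have right': "GKder False (G2, replicate_mset k x + (replicate_mset (v - u) x + D2))"
    using right by (simp add: replicate_mset_add[symmetric] add.assoc[symmetric] \<open>k + (v - u) = v\<close>)
  from mcut_admissibleD[OF x left' right']
  have "GKder False (repeat_mset k (G1 + G2 + replicate_mset (u - v) x),
      repeat_mset k (replicate_mset (v - u) x + (D1 + D2)))"
    by (simp add: ac_simps)
  then show ?thesis by (rule GKder_unrepeat) (use False in \<open>simp add: k_def\<close>)
qed

text \<open>With truncated subtraction, only the surplus copies of \<open>x\<close> survive, on the side where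
  there were more of them.\<close>

lemma mix_reduced:
  assumes x: "mcut_admissible x"
    and "GKder False (G1 + replicate_mset (a1 - b1) x, replicate_mset (b1 - a1) x + D1)"
    and "GKder False (G2 + replicate_mset (a2 - b2) x, replicate_mset (b2 - a2) x + D2)"
  shows "GKder False (G1 + G2 + replicate_mset (a1 + a2 - (b1 + b2)) x,
    replicate_mset (b1 + b2 - (a1 + a2)) x + (D1 + D2))"
proof -
  consider "b1 \<le> a1" "b2 \<le> a2" | "a1 \<le> b1" "a2 \<le> b2" | "b1 \<le> a1" "a2 \<le> b2" | "a1 \<le> b1" "b2 \<le> a2"
    by linarith
  then show ?thesis
  proof cases
    case 1
    with GKder_add[OF assms(2,3)] show ?thesis by (simp add: replicate_mset_add[symmetric] ac_simps)
  next
    case 2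
    with GKder_add[OF assms(2,3)] show ?thesis by (simp add: replicate_mset_add[symmetric] ac_simps)
  next
    case 3
    then have "b1 - a1 = 0" "a2 - b2 = 0" "a1 - b1 - (b2 - a2) = a1 + a2 - (b1 + b2)"
      "b2 - a2 - (a1 - b1) = b1 + b2 - (a1 + a2)" by arith+
    with mcut_opposite[OF x, of G1 "a1 - b1" D1 G2 "b2 - a2" D2] assms(2,3)
    show ?thesis by (simp add: ac_simps)
  next
    case 4
    then have "b2 - a2 = 0" "a1 - b1 = 0" "a2 - b2 - (b1 - a1) = a1 + a2 - (b1 + b2)"
      "b1 - a1 - (a2 - b2) = b1 + b2 - (a1 + a2)" by arith+
    with mcut_opposite[OF x, of G2 "a2 - b2" D2 G1 "b1 - a1" D1] assms(2,3)
    show ?thesis by (simp add: ac_simps)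
  qed
qed

lemma cancel_under_Box:
  assumes chi: "cancellable chi"
    and "GKder False (G + replicate_mset a chi, replicate_mset m chi)" "c \<le> a" "c \<le> m"
  shows "GKder False (image_mset Box G + replicate_mset (a - c) (Box chi),
    replicate_mset (m - c) (Box chi))"
proof -
  have "a - c + c = a" "c + (m - c) = m" using assms(3,4) by simp_all
  with assms(2) have "GKder False ((G + replicate_mset (a - c) chi) + replicate_mset c chi,
      replicate_mset c chi + replicate_mset (m - c) chi)"
    by (simp only: add.assoc replicate_mset_add[symmetric])
  from GKder.box[OF cancellableD[OF chi this]] show ?thesis by simp
qed

lemma reduce_non_Imp:
  assumes not_Imp: "\<And>phi psi. x \<noteq> Imp phi psi"
    and Box: "\<And>chi. x = Box chi \<Longrightarrow> cancellable chi"
    and x: "mcut_admissible x"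
    and "GKder False (G', D')" "G' = G + replicate_mset a x" "D' = replicate_mset b x + D"
  shows "GKder False (G + replicate_mset (a - b) x, replicate_mset (b - a) x + D)"
  using assms(4-)
proof (induction G' D' arbitrary: G a b D rule: GKder_cutfree_induct)
  case (ident M)
  have counts: "count (G + replicate_mset a x) y = count (replicate_mset b x + D) y" for y
    using ident by simp
  have "count (G + replicate_mset (a - b) x) y = count (replicate_mset (b - a) x + D) y" for y
    using counts[of y] by (cases "y = x") auto
  then have "G + replicate_mset (a - b) x = replicate_mset (b - a) x + D"
    by (rule multiset_eqI)
  then show ?case using GKder.ident by metis
next
  case (mix G1 D1 G2 D2)
  from mix.prems obtain A1 A2 a1 a2 where left: "G1 = A1 + replicate_mset a1 x"
    "G2 = A2 + replicate_mset a2 x" "G = A1 + A2" "a = a1 + a2"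
    by (auto elim: union_eq_plus_replicate_msetE)
  from mix.prems obtain E1 E2 b1 b2 where right: "D1 = E1 + replicate_mset b1 x"
    "D2 = E2 + replicate_mset b2 x" "D = E1 + E2" "b = b1 + b2"
    by (auto simp: add.commute elim: union_eq_plus_replicate_msetE)
  from mix_reduced[OF x mix.IH(1)[of A1 a1 b1 E1] mix.IH(2)[of A2 a2 b2 E2]] left right
  show ?case by (simp add: ac_simps)
next
  case (sc n G0 D0)
  from sc.prems sc.IH[of "repeat_mset n G" "n * a" "n * b" "repeat_mset n D"]
  have "GKder False (repeat_mset n (G + replicate_mset (a - b) x),
      repeat_mset n (replicate_mset (b - a) x + D))"
    by (simp add: repeat_replicate_mset diff_mult_distrib2)
  then show ?case by (rule GKder_unrepeat) (use sc.hyps in simp)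
next
  case (impL G0 D0 phi psi)
  then obtain A where A: "G = add_mset (Imp phi psi) A" "G0 = A + replicate_mset a x"
    using not_Imp by (metis add_mset_eq_plus_replicate_msetE)
  with impL.IH[of "add_mset psi A" a b "add_mset phi D"] impL.prems show ?case
    using GKder_impL'[of False psi "A + replicate_mset (a - b) x"
        phi "replicate_mset (b - a) x + D"]
    by simp
next
  case (impR G0 D0 phi psi)
  then obtain E where E: "D = add_mset (Imp phi psi) E" "D0 = E + replicate_mset b x"
    using not_Imp by (metis add.commute add_mset_eq_plus_replicate_msetE)
  with impR.IH[of "add_mset phi G" a b "add_mset psi E"] impR.prems show ?case
    using GKder_impR'[of False phi "G + replicate_mset (a - b) x"
        psi "replicate_mset (b - a) x + E"]
    by simp
next
  case (box H m theta)
  show ?case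
  proof (cases "b = 0")
    case True
    with box.prems GKder.box[OF box.hyps(1)] show ?thesis by simp
  next
    case False
    with box.prems have x: "x = Box theta" and "b \<le> m" "D = replicate_mset (m - b) (Box theta)"
      using replicate_mset_eq_replicate_plusD[of m "Box theta" b x D] by auto
    with box.prems obtain H' where "H = H' + replicate_mset a theta" "G = image_mset Box H'"
      by (auto elim: image_Box_eq_plus_replicate_msetE)
    with cancel_under_Box[OF Box[OF x], of H' a m "min a b"] box.hyps(1) \<open>b \<le> m\<close>
    have "GKder False (G + replicate_mset (a - min a b) x, replicate_mset (m - min a b) x)"
      by (simp add: x)
    moreover have "a - min a b = a - b" "m - min a b = (b - a) + (m - b)" using \<open>b \<le> m\<close> by auto
    ultimately show ?thesis using \<open>D = _\<close> x by (simp add: replicate_mset_add)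
  qed
qed

lemma cancellable_non_Imp:
  assumes "\<And>phi psi. x \<noteq> Imp phi psi" and "\<And>chi. x = Box chi \<Longrightarrow> cancellable chi"
  shows "cancellable x"
  unfolding cancellable_def
  using reduce_non_Imp[OF assms mcut_admissible_non_Imp[OF assms] _ refl refl] by fastforce

lemma all_cancellable: "cancellable x"
  by (induction x) (auto intro: cancellable_Imp cancellable_non_Imp)

lemma cut_admissible:
  assumes "GKder False (G + {#phi#}, D)" and "GKder False (P, {#phi#} + S)"
  shows "GKder False (G + P, S + D)"
proof -
  from GKder_add[OF assms]
  have "GKder False ((G + P) + replicate_mset 1 phi, replicate_mset 1 phi + (S + D))"
    by (simp add: ac_simps)
  then show ?thesis by (rule cancellableD[OF all_cancellable])
qed

theorem theorem4p6:
  fixes S :: sequent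
  assumes "GKder True S"
  shows "GKder False S"
  using assms
proof (induction rule: GKder.induct)
  case (cut G phi D P S)
  from cut.IH show ?case by (rule cut_admissible)
qed (rule GKder.intros; assumption)+

end
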